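(* Let $w(x,y)=x^{a_1}y^{b_1}\cdots x^{a_k}y^{b_k}\in F_2$ with all integers $a_i\neq0$, $b_i\neq 0$, let $B=\sum_{i=1}^k b_i\neq 0$ and $B_i=\sum_{j<i}b_j$. Write $2B_i=k_iB+T_i$ with integers $k_i$ and $0\le T_i<B$. If the word map $w:\mathrm{SL}(2,\mathbb{C})^2\to\mathrm{SL}(2,\mathbb{C})$ is not surjective, then for every integer $0\le T<B$, $$\sum_{i:\,T_i=T} a_i(-1)^{k_i}=0.$$
   Context: The word map sends $(X,Y)$ to $X^{a_1}Y^{b_1}\cdots X^{a_k}Y^{b_k}$. *)

theory Defs
  imports "HOL-Analysis.Analysis"
begin

definition SL2 :: "(complex^2^2) set" where
  "SL2 = {A. det A = 1}"

fun mat_pow :: "complex^2^2 \<Rightarrow> nat \<Rightarrow> complex^2^2" where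
  "mat_pow A 0 = mat 1"
| "mat_pow A (Suc n) = A ** mat_pow A n"

definition mat_zpow :: "complex^2^2 \<Rightarrow> int \<Rightarrow> complex^2^2" where
  "mat_zpow A z = (if 0 \<le> z then mat_pow A (nat z) else mat_pow (matrix_inv A) (nat (- z)))"

definition word_map :: "int list \<Rightarrow> int list \<Rightarrow> complex^2^2 \<Rightarrow> complex^2^2 \<Rightarrow> complex^2^2" where
  "word_map as bs X Y = foldr (\<lambda>(a, b) acc. mat_zpow X a ** mat_zpow Y b ** acc) (zip as bs) (mat 1)"

text \<open>0-indexed: B_i = sum of b_j for j < i; 2 B_i = k_i B + T_i with 0 \<le> T_i < |B|.\<close>
definition Bpre :: "int list \<Rightarrow> nat \<Rightarrow> int" where
  "Bpre bs i = sum_list (take i bs)"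

definition Tval :: "int list \<Rightarrow> nat \<Rightarrow> int" where
  "Tval bs i = (2 * Bpre bs i) mod \<bar>sum_list bs\<bar>"

definition kval :: "int list \<Rightarrow> nat \<Rightarrow> int" where
  "kval bs i = (2 * Bpre bs i - Tval bs i) div sum_list bs"

end

theory Submission
  imports Defs "HOL-Computational_Algebra.Polynomial"
begin

text \<open>
  We prove the contrapositive: if one of the sums is nonzero, then the polynomial
  \<open>P(z) = \<Sum>\<^sub>i a\<^sub>i (-1)\<^bsup>k\<^sub>i\<^esup> z\<^bsup>T\<^sub>i\<^esup>\<close> is nonzero of degree \<open>< |B|\<close>, so it does not vanish at
  some \<open>t\<close> with \<open>t\<^bsup>|B|\<^esup> = -1\<close>. For \<open>x = [[1,s],[0,1]]\<close> and \<open>y = diag(t, 1/t)\<close>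
  the word is \<open>[[t\<^bsup>B\<^esup>, s Q(t)], [0, t\<^bsup>-B\<^esup>]]\<close> with \<open>Q(t) = \<Sum>\<^sub>i a\<^sub>i t\<^bsup>2B\<^sub>i - B\<^esup>\<close>, and
  \<open>Q(t) = -P(t)\<close> when \<open>t\<^bsup>B\<^esup> = -1\<close>; hence every \<open>-[[1,c],[0,1]]\<close> is a value of \<open>w\<close>.
  Since \<open>B \<noteq> 0\<close>, the values \<open>w(1, [[1,u],[0,1]])\<close> and \<open>w(1, diag(t, 1/t))\<close> already
  give all unipotent and all diagonal matrices. These meet every conjugacy class of
  \<open>SL(2,\<complex>)\<close>, and the image of a word map is closed under conjugation.
\<close>

definition mat2 :: "complex \<Rightarrow> complex \<Rightarrow> complex \<Rightarrow> complex \<Rightarrow> complex^2^2" where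
  "mat2 a b c d = (\<chi> i j. if i = 1 then (if j = 1 then a else b) else (if j = 1 then c else d))"

lemma mat2_nth [simp]:
  "mat2 a b c d $ 1 $ 1 = a" "mat2 a b c d $ 1 $ 2 = b"
  "mat2 a b c d $ 2 $ 1 = c" "mat2 a b c d $ 2 $ 2 = d"
  by (simp_all add: mat2_def)

lemma mat2_eq_iff: "A = mat2 a b c d \<longleftrightarrow> A$1$1 = a \<and> A$1$2 = b \<and> A$2$1 = c \<and> A$2$2 = d"
  by (auto simp: vec_eq_iff forall_2)

lemma mat2_cases: obtains a b c d where "A = mat2 a b c d"
  using mat2_eq_iff by blast

lemma mat2_mult:
  "mat2 a b c d ** mat2 a' b' c' d' =
     mat2 (a*a' + b*c') (a*b' + b*d') (c*a' + d*c') (c*b' + d*d')"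
  by (simp add: mat2_eq_iff matrix_matrix_mult_def sum_2)

lemma mat_1_eq_mat2: "mat 1 = mat2 1 0 0 1"
  by (simp add: mat2_eq_iff mat_def)

lemma det_mat2: "det (mat2 a b c d) = a*d - b*c"
  by (simp add: det_2)

lemma mat2_in_SL2: "a*d - b*c = 1 \<Longrightarrow> mat2 a b c d \<in> SL2"
  by (simp add: SL2_def det_mat2)

lemma matrix_mul_matrix_inv:
  fixes A :: "'a::semiring_1^'n^'m"
  assumes "invertible A"
  shows "A ** matrix_inv A = mat 1" "matrix_inv A ** A = mat 1"
  using someI_ex[OF assms[unfolded invertible_def]] unfolding matrix_inv_def by auto

lemma matrix_inv_unique:
  fixes A :: "'a::semiring_1^'n^'m" and B :: "'a^'m^'n"
  assumes "A ** B = mat 1" "B ** A = mat 1"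
  shows "matrix_inv A = B"
proof -
  have "invertible A"
    using assms unfolding invertible_def by blast
  note inv = matrix_mul_matrix_inv[OF this]
  have "matrix_inv A = (B ** A) ** matrix_inv A"
    using assms by (simp add: matrix_mul_lid)
  also have "\<dots> = B"
    using inv by (simp add: matrix_mul_assoc[symmetric] matrix_mul_rid)
  finally show ?thesis .
qed

lemma SL2_invertible: "X \<in> SL2 \<Longrightarrow> invertible X"
  by (simp add: SL2_def invertible_det_nz)

lemma mat_pow_unipotent: "mat_pow (mat2 1 s 0 1) n = mat2 1 (of_nat n * s) 0 1"
  by (induction n) (simp_all add: mat_1_eq_mat2 mat2_mult algebra_simps)

lemma mat_pow_diagonal: "mat_pow (mat2 t 0 0 u) n = mat2 (t^n) 0 0 (u^n)"
  by (induction n) (simp_all add: mat_1_eq_mat2 mat2_mult algebra_simps)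

lemma mat_zpow_unipotent: "mat_zpow (mat2 1 s 0 1) a = mat2 1 (of_int a * s) 0 1"
proof -
  have "matrix_inv (mat2 1 s 0 1) = mat2 1 (-s) 0 1"
    by (rule matrix_inv_unique) (simp_all add: mat_1_eq_mat2 mat2_mult)
  then show ?thesis
    by (simp add: mat_zpow_def mat_pow_unipotent)
qed

lemma mat_zpow_diagonal:
  assumes "t \<noteq> 0"
  shows "mat_zpow (mat2 t 0 0 (inverse t)) b = mat2 (t powi b) 0 0 (t powi (-b))"
proof -
  have "matrix_inv (mat2 t 0 0 (inverse t)) = mat2 (inverse t) 0 0 t"
    using assms by (intro matrix_inv_unique) (simp_all add: mat_1_eq_mat2 mat2_mult)
  then show ?thesis
    by (auto simp: mat_zpow_def mat_pow_diagonal power_int_def power_inverse)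
qed

lemma mat_zpow_mat_1: "mat_zpow (mat 1) a = mat 1"
  using mat_zpow_unipotent[of 0 a] by (simp add: mat_1_eq_mat2)

lemma word_map_Nil: "word_map [] [] X Y = mat 1"
  by (simp add: word_map_def)

lemma word_map_Cons:
  "word_map (a # as) (b # bs) X Y = mat_zpow X a ** mat_zpow Y b ** word_map as bs X Y"
  by (simp add: word_map_def)

lemma word_map_identity_unipotent:
  assumes "length as = length bs"
  shows "word_map as bs (mat 1) (mat2 1 u 0 1) = mat2 1 (of_int (sum_list bs) * u) 0 1"
  using assms
  by (induction as bs rule: list_induct2)
     (simp_all add: word_map_Nil word_map_Cons mat_1_eq_mat2 mat_zpow_mat_1[unfolded mat_1_eq_mat2]
        mat_zpow_unipotent mat2_mult algebra_simps)

lemma word_map_unipotent_diagonal: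
  assumes "length as = length bs" and "t \<noteq> 0"
  shows "word_map as bs (mat2 1 s 0 1) (mat2 t 0 0 (inverse t)) =
    mat2 (t powi sum_list bs)
      (s * (\<Sum>i<length as. of_int (as ! i) * t powi (2 * Bpre bs i - sum_list bs)))
      0 (t powi (- sum_list bs))"
  using assms(1)
proof (induction as bs rule: list_induct2)
  case Nil
  then show ?case by (simp add: word_map_Nil mat_1_eq_mat2)
next
  case (Cons a as b bs)
  let ?Q = "\<lambda>as bs. \<Sum>i<length as. of_int (as ! i) * t powi (2 * Bpre bs i - sum_list bs)"
  have Bpre_Cons: "Bpre (b # bs) 0 = 0" "Bpre (b # bs) (Suc i) = b + Bpre bs i" for i
    by (simp_all add: Bpre_def)
  have "?Q (a # as) (b # bs) = of_int a * t powi (- (b + sum_list bs)) + t powi b * ?Q as bs"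
    unfolding length_Cons sum.lessThan_Suc_shift
    using assms(2) by (simp add: Bpre_Cons power_int_diff power_int_add sum_distrib_left algebra_simps)
  moreover have "t powi b * (t powi sum_list bs * t powi (- b - sum_list bs)) = 1"
    using assms(2) by (simp add: power_int_add[symmetric])
  ultimately show ?case
    unfolding word_map_Cons Cons.IH mat_zpow_diagonal[OF assms(2)] mat_zpow_unipotent mat2_mult
    using assms(2) by (simp add: mat2_eq_iff power_int_add power_int_minus field_simps)
qed

lemma mat_pow_conj:
  assumes "g ** h = mat 1" "h ** g = mat 1"
  shows "mat_pow (g ** X ** h) n = g ** mat_pow X n ** h"
proof (induction n)
  case 0
  then show ?case using assms by (simp add: matrix_mul_rid)
next
  case (Suc n)
  have "g ** X ** h ** (g ** mat_pow X n ** h) = g ** X ** (h ** g) ** mat_pow X n ** h"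
    by (simp add: matrix_mul_assoc)
  then show ?case using Suc assms by (simp add: matrix_mul_rid matrix_mul_assoc)
qed

lemma matrix_inv_conj:
  fixes g h X :: "'a::semiring_1^'n^'n"
  assumes "g ** h = mat 1" "h ** g = mat 1" "invertible X"
  shows "matrix_inv (g ** X ** h) = g ** matrix_inv X ** h"
proof (rule matrix_inv_unique)
  have "g ** X ** h ** (g ** matrix_inv X ** h) = g ** (X ** (h ** g) ** matrix_inv X) ** h"
    and "g ** matrix_inv X ** h ** (g ** X ** h) = g ** (matrix_inv X ** (h ** g) ** X) ** h"
    by (simp_all add: matrix_mul_assoc)
  then show "g ** X ** h ** (g ** matrix_inv X ** h) = mat 1"
    and "g ** matrix_inv X ** h ** (g ** X ** h) = mat 1"
    using assms matrix_mul_matrix_inv[OF assms(3)] by (simp_all add: matrix_mul_rid)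
qed

lemma mat_zpow_conj:
  assumes "g ** h = mat 1" "h ** g = mat 1" "invertible X"
  shows "mat_zpow (g ** X ** h) a = g ** mat_zpow X a ** h"
  using assms by (simp add: mat_zpow_def mat_pow_conj matrix_inv_conj)

lemma word_map_conj:
  assumes "g ** h = mat 1" "h ** g = mat 1" "invertible X" "invertible Y"
    and "length as = length bs"
  shows "word_map as bs (g ** X ** h) (g ** Y ** h) = g ** word_map as bs X Y ** h"
  using assms(5)
proof (induction as bs rule: list_induct2)
  case Nil
  then show ?case using assms by (simp add: word_map_Nil matrix_mul_rid)
next
  case (Cons a as b bs)
  have "g ** mat_zpow X a ** h ** (g ** mat_zpow Y b ** h) ** (g ** word_map as bs X Y ** h)
     = g ** mat_zpow X a ** (h ** g) ** mat_zpow Y b ** (h ** g) ** word_map as bs X Y ** h"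
    by (simp add: matrix_mul_assoc)
  then show ?case using assms Cons.IH
    by (simp add: word_map_Cons mat_zpow_conj matrix_mul_rid matrix_mul_assoc)
qed

definition word_image :: "int list \<Rightarrow> int list \<Rightarrow> (complex^2^2) set" where
  "word_image as bs = {word_map as bs X Y |X Y. X \<in> SL2 \<and> Y \<in> SL2}"

lemma word_imageI: "X \<in> SL2 \<Longrightarrow> Y \<in> SL2 \<Longrightarrow> word_map as bs X Y \<in> word_image as bs"
  by (auto simp: word_image_def)

lemma word_image_conj:
  assumes "M \<in> word_image as bs" "g ** h = mat 1" "h ** g = mat 1" "length as = length bs"
  shows "g ** M ** h \<in> word_image as bs"
proof -
  obtain X Y where XY: "X \<in> SL2" "Y \<in> SL2" "M = word_map as bs X Y"
    using assms(1) by (auto simp: word_image_def)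
  have "det g * det h = 1"
    using assms(2) by (metis det_I det_mul)
  then have conj_SL2: "g ** Z ** h \<in> SL2" if "Z \<in> SL2" for Z
    using that by (simp add: SL2_def det_mul)
  show ?thesis
    using word_map_conj[OF assms(2,3) SL2_invertible SL2_invertible assms(4)] XY
    by (metis conj_SL2 word_imageI)
qed

lemma Tval_bounds:
  assumes "sum_list bs \<noteq> 0"
  shows "0 \<le> Tval bs i" "Tval bs i < \<bar>sum_list bs\<bar>"
  using assms by (simp_all add: Tval_def)

lemma double_Bpre_eq:
  assumes "sum_list bs \<noteq> 0"
  shows "2 * Bpre bs i = kval bs i * sum_list bs + Tval bs i"
proof -
  have "\<bar>sum_list bs\<bar> dvd 2 * Bpre bs i - Tval bs i"
    unfolding Tval_def by (rule dvd_minus_mod)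
  then show ?thesis
    unfolding kval_def by simp
qed

definition word_poly :: "int list \<Rightarrow> int list \<Rightarrow> complex poly" where
  "word_poly as bs =
     (\<Sum>i<length as. monom (of_int (as ! i * (if even (kval bs i) then 1 else -1))) (nat (Tval bs i)))"

lemma coeff_word_poly:
  assumes "sum_list bs \<noteq> 0" "0 \<le> T"
  shows "coeff (word_poly as bs) (nat T) =
    of_int (\<Sum>i \<in> {i. i < length as \<and> Tval bs i = T}. as ! i * (if even (kval bs i) then 1 else -1))"
proof -
  have "{i. i < length as \<and> Tval bs i = T} = {i \<in> {..<length as}. nat (Tval bs i) = nat T}"
    using assms Tval_bounds(1)[OF assms(1)] by (auto simp: nat_eq_iff2)
  then show ?thesis
    by (simp add: word_poly_def coeff_sum coeff_monom flip: sum.inter_filter)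
qed

lemma degree_word_poly:
  assumes "sum_list bs \<noteq> 0"
  shows "degree (word_poly as bs) < nat \<bar>sum_list bs\<bar>"
  unfolding word_poly_def
  using assms Tval_bounds[OF assms]
  by (intro degree_sum_less) (auto intro: le_less_trans[OF degree_monom_le])

lemma power_int_minus_one: "(-1 :: 'a::field) powi k = (if even k then 1 else -1)"
  by (cases "0 \<le> k") (auto simp: power_int_def even_nat_iff)

lemma power_int_double_Bpre:
  fixes t :: complex
  assumes "sum_list bs \<noteq> 0" and t: "t powi sum_list bs = -1"
  shows "t powi (2 * Bpre bs i - sum_list bs) =
    - of_int (if even (kval bs i) then 1 else -1) * t ^ nat (Tval bs i)"
proof -
  have "t \<noteq> 0"
    using assms by auto
  then have "t powi (2 * Bpre bs i - sum_list bs) =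
      (t powi sum_list bs) powi kval bs i * t powi Tval bs i / t powi sum_list bs"
    by (simp add: double_Bpre_eq[OF assms(1)] power_int_diff power_int_add
        power_int_mult mult.commute[of "kval bs i"])
  also have "t powi Tval bs i = t ^ nat (Tval bs i)"
    using Tval_bounds(1)[OF assms(1)] by (metis nat_0_le power_int_of_nat)
  also have "(t powi sum_list bs) powi kval bs i * t ^ nat (Tval bs i) / t powi sum_list bs =
      - of_int (if even (kval bs i) then 1 else -1) * t ^ nat (Tval bs i)"
    by (simp add: t power_int_minus_one)
  finally show ?thesis .
qed

lemma prefix_sum_eq_word_poly:
  fixes t :: complex
  assumes "sum_list bs \<noteq> 0" "t powi sum_list bs = -1"
  shows "(\<Sum>i<length as. of_int (as ! i) * t powi (2 * Bpre bs i - sum_list bs)) =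
    - poly (word_poly as bs) t"
  by (simp add: power_int_double_Bpre[OF assms] word_poly_def poly_sum poly_monom mult.assoc
      flip: sum_negf)

lemma ex_nth_root_not_root:
  fixes p :: "complex poly"
  assumes "p \<noteq> 0" "degree p < n" "c \<noteq> 0"
  obtains z where "z ^ n = c" "poly p z \<noteq> 0"
proof -
  have "card {z. poly p z = 0} < card {z. z ^ n = c}"
    using card_poly_roots_bound[OF assms(1)] card_nth_roots[OF assms(3)] assms(2) by simp
  then have "\<not> {z. z ^ n = c} \<subseteq> {z. poly p z = 0}"
    using card_mono[OF poly_roots_finite[OF assms(1)]] by (meson not_le)
  then show ?thesis
    using that by blast
qed

lemma ex_power_int_eq:
  assumes "(k::int) \<noteq> 0" "(l::complex) \<noteq> 0"
  obtains t where "t powi k = l"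
proof
  show "exp (Ln l / of_int k) powi k = l"
    using assms by (simp add: exp_power_int)
qed

lemma unipotent_in_word_image:
  assumes "length as = length bs" "sum_list bs \<noteq> 0"
  shows "mat2 1 c 0 1 \<in> word_image as bs"
proof -
  have "word_map as bs (mat 1) (mat2 1 (c / of_int (sum_list bs)) 0 1) = mat2 1 c 0 1"
    using assms by (simp add: word_map_identity_unipotent)
  moreover have "mat 1 \<in> SL2" "mat2 1 (c / of_int (sum_list bs)) 0 1 \<in> SL2"
    by (simp_all add: mat_1_eq_mat2 mat2_in_SL2)
  ultimately show ?thesis
    by (metis word_imageI)
qed

lemma diagonal_in_word_image:
  assumes "length as = length bs" "sum_list bs \<noteq> 0" "l \<noteq> 0"
  shows "mat2 l 0 0 (inverse l) \<in> word_image as bs"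
proof -
  obtain t where t: "t powi sum_list bs = l"
    using ex_power_int_eq assms(2,3) by blast
  then have "t \<noteq> 0"
    using assms(2,3) by auto
  have "word_map as bs (mat2 1 0 0 1) (mat2 t 0 0 (inverse t)) = mat2 l 0 0 (inverse l)"
    using word_map_unipotent_diagonal[OF assms(1) \<open>t \<noteq> 0\<close>, of 0]
    by (simp add: t power_int_minus)
  moreover have "mat2 1 0 0 1 \<in> SL2" "mat2 t 0 0 (inverse t) \<in> SL2"
    using \<open>t \<noteq> 0\<close> by (simp_all add: mat2_in_SL2)
  ultimately show ?thesis
    by (metis word_imageI)
qed

lemma minus_unipotent_in_word_image:
  assumes "length as = length bs" "sum_list bs \<noteq> 0" "word_poly as bs \<noteq> 0"
  shows "mat2 (-1) c 0 (-1) \<in> word_image as bs"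
proof -
  let ?Q = "\<lambda>t. \<Sum>i<length as. of_int (as ! i) * t powi (2 * Bpre bs i - sum_list bs)"
  obtain t where t: "t ^ nat \<bar>sum_list bs\<bar> = -1" and "poly (word_poly as bs) t \<noteq> 0"
    using ex_nth_root_not_root[OF assms(3) degree_word_poly[OF assms(2)], of "-1"] by auto
  moreover have tB: "t powi sum_list bs = -1"
    using t by (cases "0 \<le> sum_list bs") (simp_all add: power_int_def power_inverse)
  ultimately have "?Q t \<noteq> 0"
    using prefix_sum_eq_word_poly[OF assms(2) tB] by simp
  have "t \<noteq> 0"
    using tB assms(2) by auto
  with \<open>?Q t \<noteq> 0\<close> have "word_map as bs (mat2 1 (c / ?Q t) 0 1) (mat2 t 0 0 (inverse t)) = mat2 (-1) c 0 (-1)"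
    by (simp add: word_map_unipotent_diagonal[OF assms(1)] tB power_int_minus)
  moreover have "mat2 1 (c / ?Q t) 0 1 \<in> SL2" "mat2 t 0 0 (inverse t) \<in> SL2"
    using \<open>t \<noteq> 0\<close> by (simp_all add: mat2_in_SL2)
  ultimately show ?thesis
    by (metis word_imageI)
qed

lemma upper_triangular_conj_diagonal:
  fixes l c :: complex
  assumes "l \<noteq> 0" "l \<noteq> 1" "l \<noteq> -1"
  defines "d \<equiv> c / (inverse l - l)"
  shows "mat2 l c 0 (inverse l) = mat2 1 d 0 1 ** mat2 l 0 0 (inverse l) ** mat2 1 (-d) 0 1"
proof -
  have "(l - 1) * (l + 1) \<noteq> 0"
    using assms(2,3) by (simp add: add_eq_0_iff2)
  then have "inverse l - l \<noteq> 0"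
    using assms(1) by (auto simp: field_simps)
  then have "d * (inverse l - l) = c"
    by (simp add: d_def)
  then have "d * inverse l - l * d = c"
    by (simp add: algebra_simps)
  then show ?thesis
    by (simp add: mat2_mult)
qed

lemma ex_reciprocal_quadratic_root: "\<exists>l::complex. l^2 - \<tau> * l + 1 = 0"
proof
  define l where "l = (\<tau> + csqrt (\<tau>^2 - 4)) / 2"
  have "2 * l - \<tau> = csqrt (\<tau>^2 - 4)"
    by (simp add: l_def field_simps)
  then have "(2 * l - \<tau>)^2 = \<tau>^2 - 4"
    by (simp add: power2_csqrt)
  then have "4 * (l^2 - \<tau> * l + 1) = 0"
    by (simp add: power2_eq_square algebra_simps)
  then show "l^2 - \<tau> * l + 1 = 0"
    by (simp only: mult_eq_0_iff) simp
qed

lemma SL2_conj_upper_triangular: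
  assumes "M \<in> SL2"
  obtains g h l c where "g ** h = mat 1" "h ** g = mat 1" "l \<noteq> 0"
    "M = g ** mat2 l c 0 (inverse l) ** h"
proof -
  obtain p q r s where M: "M = mat2 p q r s"
    using mat2_cases by blast
  have det: "p * s - q * r = 1"
    using assms by (simp add: M SL2_def det_mat2)
  show ?thesis
  proof (cases "r = 0")
    case True
    then have "p \<noteq> 0" "s = inverse p"
      using det by (auto simp: inverse_unique[symmetric])
    then show ?thesis
      using that[of "mat 1" "mat 1" p q] True by (simp add: M matrix_mul_lid matrix_mul_rid)
  next
    case False
    obtain l where l: "l^2 - (p + s) * l + 1 = 0"
      using ex_reciprocal_quadratic_root by blast
    then have "l \<noteq> 0"
      by auto
    have "p = l - s + inverse l"
      using l \<open>l \<noteq> 0\<close> by (simp add: power2_eq_square field_simps)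
    \<comment> \<open>the first column of \<open>g\<close> is an eigenvector of \<open>M\<close> for \<open>l\<close>\<close>
    define g where "g = mat2 (l - s) 1 r 0"
    define h where "h = mat2 0 (1 / r) 1 (- (l - s) / r)"
    have "g ** h = mat 1" "h ** g = mat 1"
      using False by (simp_all add: g_def h_def mat2_mult mat_1_eq_mat2 field_simps)
    moreover have "M = g ** mat2 l 1 0 (inverse l) ** h"
      using False det \<open>p = l - s + inverse l\<close> \<open>l \<noteq> 0\<close>
      by (simp add: M g_def h_def mat2_mult mat2_eq_iff field_simps)
    ultimately show ?thesis
      using that \<open>l \<noteq> 0\<close> by blast
  qed
qed

lemma upper_triangular_in_word_image:
  assumes len: "length as = length bs" and B: "sum_list bs \<noteq> 0"
    and P: "word_poly as bs \<noteq> 0" and "l \<noteq> 0"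
  shows "mat2 l c 0 (inverse l) \<in> word_image as bs"
proof -
  consider "l = 1" | "l = -1" | "l \<noteq> 1" "l \<noteq> -1"
    by blast
  then show ?thesis
  proof cases
    case 1
    then show ?thesis
      using unipotent_in_word_image[OF len B] by simp
  next
    case 2
    then show ?thesis
      using minus_unipotent_in_word_image[OF len B P] by simp
  next
    case 3
    let ?d = "c / (inverse l - l)"
    have "mat2 1 ?d 0 1 ** mat2 1 (- ?d) 0 1 = mat 1" "mat2 1 (- ?d) 0 1 ** mat2 1 ?d 0 1 = mat 1"
      by (simp_all add: mat2_mult mat_1_eq_mat2)
    then show ?thesis
      using upper_triangular_conj_diagonal[OF \<open>l \<noteq> 0\<close> 3, of c]
        word_image_conj[OF diagonal_in_word_image[OF len B \<open>l \<noteq> 0\<close>] _ _ len]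
      by simp
  qed
qed

lemma SL2_subset_word_image:
  assumes "length as = length bs" "sum_list bs \<noteq> 0" "word_poly as bs \<noteq> 0"
  shows "SL2 \<subseteq> word_image as bs"
proof
  fix M
  assume "M \<in> SL2"
  then obtain g h l c where "g ** h = mat 1" "h ** g = mat 1" "l \<noteq> 0"
    and "M = g ** mat2 l c 0 (inverse l) ** h"
    by (rule SL2_conj_upper_triangular)
  then show "M \<in> word_image as bs"
    using word_image_conj upper_triangular_in_word_image assms by metis
qed

theorem corollary7p3:
  fixes as bs :: "int list"
  assumes "length as = length bs"
    and "\<forall>i < length as. as ! i \<noteq> 0 \<and> bs ! i \<noteq> 0"
    and "sum_list bs \<noteq> 0"
    and "\<not> (\<forall>M \<in> SL2. \<exists>X \<in> SL2. \<exists>Y \<in> SL2. word_map as bs X Y = M)"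
  shows "\<forall>T::int. 0 \<le> T \<and> T < \<bar>sum_list bs\<bar> \<longrightarrow>
           (\<Sum>i \<in> {i. i < length as \<and> Tval bs i = T}.
              as ! i * (if even (kval bs i) then 1 else -1)) = 0"
proof (intro allI impI)
  fix T :: int
  assume "0 \<le> T \<and> T < \<bar>sum_list bs\<bar>"
  have "\<not> SL2 \<subseteq> word_image as bs"
    using assms(4) unfolding word_image_def by blast
  then have "word_poly as bs = 0"
    using SL2_subset_word_image assms(1,3) by blast
  then show "(\<Sum>i \<in> {i. i < length as \<and> Tval bs i = T}.
      as ! i * (if even (kval bs i) then 1 else -1)) = 0"
    using coeff_word_poly[OF assms(3), of T as] \<open>0 \<le> T \<and> _\<close>
    by (simp del: of_int_sum of_int_mult)
qed

end
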